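(* Let $(M^*,p^* )$ be a non-compact model surface of revolution with metric $dt^2+m(t)^2d\theta^2$, where $m$ satisfies $m''(t)+K(t)m(t)=0$, $m(0)=0$, $m'(0)=1$. If $K(t)\le 0$ on $[0,\infty)$ and $\int_0^\infty t\,K(t)\,dt>-\infty$, then $M^*$ admits a finite total curvature.
   Context: A non-compact model surface of revolution is $\mathbb{R}^2$ with the metric $dt^2+m(t)^2d\theta^2$, where $(t,\theta)$ are polar coordinates about the origin and $m:(0,\infty)\to(0,\infty)$ is smooth, extends to a smooth odd function around $0$, and satisfies $m'(0)=1$; its Gauss curvature is $K=-m''/m$. The total curvature is $\int K_+\,dA+\int K_-\,dA$ ($K_+=\max\{K,0\}$, $K_-=\min\{K,0\}$, $dA=m(t)\,dt\,d\theta$ the area element), and it is finite if both integrals are finite. *)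

theory Defs
  imports "HOL-Analysis.Analysis"
begin

definition smooth_real :: "(real \<Rightarrow> real) \<Rightarrow> bool" where
  "smooth_real f \<longleftrightarrow> (\<forall>n x. ((deriv ^^ n) f) differentiable (at x))"

text \<open>Warping function of a non-compact model surface of revolution
  dt^2 + m(t)^2 dtheta^2 on R^2: m is positive on (0,inf), and extends to a smooth
  odd function with m'(0) = 1 (here m is given directly as that odd extension on R).\<close>
definition model_profile :: "(real \<Rightarrow> real) \<Rightarrow> bool" where
  "model_profile m \<longleftrightarrow> smooth_real m \<and> (\<forall>t. m (- t) = - m t) \<and> deriv m 0 = 1
     \<and> (\<forall>t>0. m t > 0)"

definition gauss_curv :: "(real \<Rightarrow> real) \<Rightarrow> real \<Rightarrow> real" where
  "gauss_curv m t = - deriv (deriv m) t / m t"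

text \<open>Integrals of K_+ dA and of -K_- dA, with dA = m(t) dt dtheta in polar
  coordinates (t,theta) in (0,inf) x [0,2 pi).\<close>
definition total_curv_pos :: "(real \<Rightarrow> real) \<Rightarrow> ennreal" where
  "total_curv_pos m = (\<integral>\<^sup>+ x. indicator ({0<..} \<times> {0..<2*pi}) x *
      ennreal (max (gauss_curv m (fst x)) 0 * m (fst x)) \<partial>(lborel :: (real \<times> real) measure))"

definition total_curv_neg :: "(real \<Rightarrow> real) \<Rightarrow> ennreal" where
  "total_curv_neg m = (\<integral>\<^sup>+ x. indicator ({0<..} \<times> {0..<2*pi}) x *
      ennreal (- min (gauss_curv m (fst x)) 0 * m (fst x)) \<partial>(lborel :: (real \<times> real) measure))"

definition finite_total_curvature :: "(real \<Rightarrow> real) \<Rightarrow> bool" where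
  "finite_total_curvature m \<longleftrightarrow> total_curv_pos m < \<infinity> \<and> total_curv_neg m < \<infinity>"

end

theory Submission
  imports Defs
begin

(* Write m', m'' for the derivatives of the warping function m; then
   K = -m''/m, so K \<le> 0 means m'' \<ge> 0 on (0,\<infinity>): the profile is convex.
   Hence K_+ = 0, and the total curvature reduces (by Fubini in polar coordinates)
   to 2\<pi> times the radial integral of -K m = m''.  Convexity with m(0) = 0,
   m'(0) = 1 gives m' \<ge> 1 and m(t) \<le> t m'(t), hence
       (ln m')' = m''/m' \<le> t m''/m = -t K,
   so the hypothesis \<integral> t |K| dt < \<infinity> bounds ln m' and therefore m grows at most
   linearly: m(t) \<le> B t for t \<ge> 1.  Then m'' = |K| m \<le> B t |K| on [1,\<infinity>), while
   m'' is bounded on the compact interval [0,1]; so \<integral> m'' dt < \<infinity>.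
   The file first proves these estimates for an abstract C^2 convex profile given by
   m, m', m'' (ending with the finiteness of \<integral> m'' dt), then the Fubini reduction
   of both total curvature integrals to radial ones, then unpacks the definition of
   a model profile; the theorem combines these three parts. *)

lemma mono_on_halfline_of_nonneg_deriv:
  fixes f f' :: "real \<Rightarrow> real"
  assumes deriv: "\<And>x. (f has_real_derivative f' x) (at x)"
    and nonneg: "\<And>x. x > 0 \<Longrightarrow> 0 \<le> f' x"
    and "0 \<le> a" "a \<le> b"
  shows "f a \<le> f b"
proof (rule DERIV_nonneg_imp_increasing_open[OF \<open>a \<le> b\<close>])
  fix x assume "a < x" "x < b"
  then show "\<exists>y. (f has_real_derivative y) (at x) \<and> 0 \<le> y"
    using deriv nonneg \<open>0 \<le> a\<close> by (meson le_less_trans)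
next
  show "continuous_on {a..b} f"
    using deriv by (meson DERIV_isCont continuous_at_imp_continuous_on)
qed

text \<open>A convex profile starting at the origin lies below t m'(t): by the mean value
  theorem m(t) = t m'(z) for some z \<in> (0,t), and m' is nondecreasing.\<close>
lemma convex_profile_below_tangent:
  fixes m m' m'' :: "real \<Rightarrow> real"
  assumes d1: "\<And>x. (m has_real_derivative m' x) (at x)"
    and d2: "\<And>x. (m' has_real_derivative m'' x) (at x)"
    and convex: "\<And>t. t > 0 \<Longrightarrow> 0 \<le> m'' t"
    and "m 0 = 0" "t > 0"
  shows "m t \<le> t * m' t"
proof -
  obtain z where z: "0 < z" "z < t" "m t - m 0 = (t - 0) * m' z"
    using MVT2[OF \<open>t > 0\<close>, of m m'] d1 by blast
  have "m' z \<le> m' t"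
    using mono_on_halfline_of_nonneg_deriv[OF d2 convex] z by simp
  then show ?thesis
    using z \<open>m 0 = 0\<close> \<open>t > 0\<close> by (simp add: mult_left_mono)
qed

text \<open>Integrating a bound on the logarithmic derivative f'/f of a positive function
  (fundamental theorem of calculus applied to ln f).\<close>
lemma log_growth_le_integral:
  fixes f f' w :: "real \<Rightarrow> real"
  assumes "a \<le> b"
    and deriv: "\<And>x. (f has_real_derivative f' x) (at x)"
    and pos: "\<And>x. x \<in> {a..b} \<Longrightarrow> 0 < f x"
    and le: "\<And>x. x \<in> {a..b} \<Longrightarrow> f' x / f x \<le> w x"
    and "w integrable_on {a..b}"
  shows "ln (f b) - ln (f a) \<le> integral {a..b} w"
proof -
  have ftc: "((\<lambda>x. f' x / f x) has_integral (ln (f b) - ln (f a))) {a..b}"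
  proof (rule fundamental_theorem_of_calculus[OF \<open>a \<le> b\<close>])
    fix x assume x: "x \<in> {a..b}"
    have "((\<lambda>s. ln (f s)) has_real_derivative (1 / f x * f' x)) (at x)"
      by (rule DERIV_chain2[OF DERIV_ln_divide[OF pos[OF x]] deriv])
    then show "((\<lambda>s. ln (f s)) has_vector_derivative f' x / f x) (at x within {a..b})"
      by (simp add: has_real_derivative_iff_has_vector_derivative[symmetric]
          has_field_derivative_at_within)
  qed
  have "ln (f b) - ln (f a) = integral {a..b} (\<lambda>x. f' x / f x)"
    using ftc by (simp add: integral_unique)
  also have "\<dots> \<le> integral {a..b} w"
    using integral_le[OF has_integral_integrable[OF ftc] \<open>w integrable_on {a..b}\<close>] le .
  finally show ?thesis .
qed

lemma integral_le_finite_nn_integral: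
  fixes w :: "real \<Rightarrow> real"
  assumes hi: "(w has_integral I) {a..b}"
    and nonneg: "\<And>x. x \<in> A \<Longrightarrow> 0 \<le> w x"
    and sub: "{a..b} \<subseteq> A"
    and fin: "(\<integral>\<^sup>+ x. indicator A x * ennreal (w x) \<partial>lborel) < \<infinity>"
  shows "I \<le> enn2real (\<integral>\<^sup>+ x. indicator A x * ennreal (w x) \<partial>lborel)"
proof -
  have "ennreal I = (\<integral>\<^sup>+ x. ennreal (w x) * indicator {a..b} x \<partial>lborel)"
    by (rule nn_integral_has_integral_lebesgue'[OF _ hi, symmetric]) (use nonneg sub in auto)
  also have "\<dots> \<le> (\<integral>\<^sup>+ x. indicator A x * ennreal (w x) \<partial>lborel)"
    using sub by (intro nn_integral_mono) (auto simp: indicator_def)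
  finally have "ennreal I \<le> (\<integral>\<^sup>+ x. indicator A x * ennreal (w x) \<partial>lborel)" .
  moreover have "0 \<le> I"
    by (rule has_integral_nonneg[OF hi]) (use nonneg sub in auto)
  ultimately show ?thesis
    using enn2real_mono fin by fastforce
qed

text \<open>Core estimate: for a C^2 convex profile with m(0) = 0, m'(0) = 1 whose weight
  t m''(t)/m(t) (that is, t |K(t)|) is integrable, m' is bounded, because
  ln m'(t) - ln m'(1) \<le> \<integral>_1^t s m''(s)/m(s) ds.\<close>
lemma convex_profile_derivative_bounded:
  fixes m m' m'' :: "real \<Rightarrow> real"
  assumes d1: "\<And>x. (m has_real_derivative m' x) (at x)"
    and d2: "\<And>x. (m' has_real_derivative m'' x) (at x)"
    and cont2: "continuous_on UNIV m''"
    and m0: "m 0 = 0" and m'0: "m' 0 = 1"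
    and pos: "\<And>t. t > 0 \<Longrightarrow> 0 < m t"
    and convex: "\<And>t. t > 0 \<Longrightarrow> 0 \<le> m'' t"
    and weight: "(\<integral>\<^sup>+ t. indicator {0<..} t * ennreal (t * m'' t / m t) \<partial>lborel) < \<infinity>"
  obtains D where "\<And>t. 0 \<le> t \<Longrightarrow> m' t \<le> D"
proof -
  define w where "w t = t * m'' t / m t" for t
  define C where "C = enn2real (\<integral>\<^sup>+ t. indicator {0<..} t * ennreal (w t) \<partial>lborel)"
  have m'_mono: "m' s \<le> m' t" if "0 \<le> s" "s \<le> t" for s t
    using mono_on_halfline_of_nonneg_deriv[OF d2 convex that] .
  have m'_ge1: "1 \<le> m' t" if "t \<ge> 0" for t
    using m'_mono[OF order_refl that] m'0 by simp
  have w_int: "(w has_integral integral {1..t} w) {1..t}" for t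
  proof -
    have "continuous_on {1..t} m"
      using d1 by (meson DERIV_isCont continuous_at_imp_continuous_on)
    moreover have "continuous_on {1..t} m''"
      using cont2 by (rule continuous_on_subset) simp
    ultimately have "continuous_on {1..t} w"
      unfolding w_def using pos by (intro continuous_intros) (auto intro!: less_imp_neq[symmetric])
    then show ?thesis using integrable_continuous_interval by blast
  qed
  have w_le_C: "integral {1..t} w \<le> C" for t
    unfolding C_def using convex pos weight unfolding w_def
    by (intro integral_le_finite_nn_integral[OF w_int[unfolded w_def]]) (auto intro!: divide_nonneg_pos)
  have m'_bound: "m' t \<le> m' 1 * exp C" if "t \<ge> 1" for t
  proof -
    have "ln (m' t) - ln (m' 1) \<le> integral {1..t} w"
    proof (rule log_growth_le_integral[OF that d2])
      fix s :: real assume s: "s \<in> {1..t}"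
      then have "s > 0" "0 < m' s" using m'_ge1[of s] by auto
      have "m'' s * m s \<le> m'' s * (s * m' s)"
        using convex_profile_below_tangent[OF d1 d2 convex m0 \<open>s > 0\<close>] convex[OF \<open>s > 0\<close>]
        by (rule mult_left_mono)
      then show "m'' s / m' s \<le> w s"
        unfolding w_def using \<open>0 < m' s\<close> pos[OF \<open>s > 0\<close>]
        by (simp add: divide_simps mult_ac)
    qed (auto intro: less_le_trans[OF zero_less_one m'_ge1] has_integral_integrable[OF w_int])
    then have "exp (ln (m' t)) \<le> exp (ln (m' 1) + C)" using w_le_C[of t] by simp
    then show ?thesis
      using m'_ge1[of t] m'_ge1[of 1] that by (simp add: exp_add)
  qed
  show ?thesis
  proof
    fix t :: real assume "0 \<le> t"
    have "1 \<le> exp C" unfolding C_def by simp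
    then have "m' 1 \<le> m' 1 * exp C" using m'_ge1[of 1] by simp
    then show "m' t \<le> m' 1 * exp C"
      using m'_bound[of t] m'_mono[OF \<open>0 \<le> t\<close>, of 1] by (cases "t \<le> 1") auto
  qed
qed

lemma convex_profile_linear_growth:
  fixes m m' m'' :: "real \<Rightarrow> real"
  assumes d1: "\<And>x. (m has_real_derivative m' x) (at x)"
    and d2: "\<And>x. (m' has_real_derivative m'' x) (at x)"
    and "continuous_on UNIV m''"
    and m0: "m 0 = 0" and m'0: "m' 0 = 1"
    and "\<And>t. t > 0 \<Longrightarrow> 0 < m t"
    and convex: "\<And>t. t > 0 \<Longrightarrow> 0 \<le> m'' t"
    and "(\<integral>\<^sup>+ t. indicator {0<..} t * ennreal (t * m'' t / m t) \<partial>lborel) < \<infinity>"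
  obtains B where "B \<ge> 0" "\<And>t. t > 0 \<Longrightarrow> m t \<le> B * t"
proof -
  obtain D where D: "\<And>t. 0 \<le> t \<Longrightarrow> m' t \<le> D"
    using convex_profile_derivative_bounded[OF assms] by blast
  show ?thesis
  proof
    show "0 \<le> D" using D[of 0] m'0 by simp
  next
    fix t :: real assume "0 < t"
    then have "m t \<le> t * m' t"
      using convex_profile_below_tangent[OF d1 d2 convex m0] by blast
    also have "\<dots> \<le> t * D"
      using D[of t] \<open>0 < t\<close> by (intro mult_left_mono) auto
    finally show "m t \<le> D * t" by (simp add: mult_ac)
  qed
qed

lemma nn_integral_halfline_finite_by_comparison:
  fixes h g :: "real \<Rightarrow> real"
  assumes local: "\<And>t. 0 < t \<Longrightarrow> t \<le> 1 \<Longrightarrow> h t \<le> M"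
    and tail: "\<And>t. 1 < t \<Longrightarrow> h t \<le> B * g t" and "0 \<le> B"
    and g_meas: "g \<in> borel_measurable borel"
    and g_fin: "(\<integral>\<^sup>+ t. indicator {0<..} t * ennreal (g t) \<partial>lborel) < \<infinity>"
  shows "(\<integral>\<^sup>+ t. indicator {0<..} t * ennreal (h t) \<partial>lborel) < \<infinity>"
proof -
  define F where "F t = ennreal M * indicator {0<..1} t
      + ennreal B * (indicator {0<..} t * ennreal (g t))" for t :: real
  have dominated: "indicator {0<..} t * ennreal (h t) \<le> F t" for t
  proof (cases "0 < t \<and> t \<le> 1")
    case True
    then have "ennreal (h t) \<le> ennreal M" using local by (intro ennreal_leI) auto
    then show ?thesis using True unfolding F_def by (simp add: indicator_def add_increasing2)
  next
    case False
    have "ennreal (h t) \<le> ennreal B * ennreal (g t)" if "1 < t"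
      using tail[OF that] \<open>0 \<le> B\<close> by (simp add: ennreal_mult'[symmetric] ennreal_leI)
    then show ?thesis using False unfolding F_def by (auto simp: indicator_def add_increasing)
  qed
  have "(\<integral>\<^sup>+ t. indicator {0<..} t * ennreal (h t) \<partial>lborel) \<le> integral\<^sup>N lborel F"
    using dominated by (intro nn_integral_mono) auto
  also have "integral\<^sup>N lborel F = ennreal M * emeasure lborel {0<..1::real}
      + ennreal B * (\<integral>\<^sup>+ t. indicator {0<..} t * ennreal (g t) \<partial>lborel)"
    unfolding F_def using g_meas
    by (subst nn_integral_add, measurable, subst nn_integral_cmult, measurable,
        subst nn_integral_cmult_indicator, auto)
  also have "\<dots> < \<infinity>" using g_fin by (simp add: ennreal_mult_less_top)
  finally show ?thesis .
qed

text \<open>For a convex profile as in the growth estimate, the radial integral of m''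
  (which equals -K m, the density of the negative curvature) is finite: m'' is
  bounded on [0,1], and on (1,\<infinity>) we have m'' = |K| m \<le> B t |K|.\<close>
lemma convex_profile_second_derivative_integrable:
  fixes m m' m'' :: "real \<Rightarrow> real"
  assumes d1: "\<And>x. (m has_real_derivative m' x) (at x)"
    and "\<And>x. (m' has_real_derivative m'' x) (at x)"
    and cont2: "continuous_on UNIV m''"
    and "m 0 = 0" "m' 0 = 1"
    and pos: "\<And>t. t > 0 \<Longrightarrow> 0 < m t"
    and convex: "\<And>t. t > 0 \<Longrightarrow> 0 \<le> m'' t"
    and weight: "(\<integral>\<^sup>+ t. indicator {0<..} t * ennreal (t * m'' t / m t) \<partial>lborel) < \<infinity>"
  shows "(\<integral>\<^sup>+ t. indicator {0<..} t * ennreal (m'' t) \<partial>lborel) < \<infinity>"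
proof -
  obtain B where "B \<ge> 0" and growth: "\<And>t. t > 0 \<Longrightarrow> m t \<le> B * t"
    using convex_profile_linear_growth[OF assms] by blast
  obtain M where M: "\<And>t. t \<in> {0..1} \<Longrightarrow> m'' t \<le> M"
    using compact_attains_sup[OF compact_continuous_image[OF
        continuous_on_subset[OF cont2] compact_Icc], of 0 1] by fastforce
  have tail: "m'' t \<le> B * (t * m'' t / m t)" if "1 < t" for t
  proof -
    have "m'' t * m t \<le> m'' t * (B * t)"
      using growth[of t] convex[of t] that by (intro mult_left_mono) auto
    then show ?thesis using pos[of t] that by (simp add: divide_simps mult_ac)
  qed
  have [measurable]: "m \<in> borel_measurable borel" "m'' \<in> borel_measurable borel"
    using d1 cont2 by (auto intro!: borel_measurable_continuous_onI
        continuous_at_imp_continuous_on DERIV_isCont)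
  show ?thesis
    by (rule nn_integral_halfline_finite_by_comparison[where M = M, OF _ tail \<open>B \<ge> 0\<close> _ weight])
      (use M in auto)
qed

lemma nn_integral_radial_strip:
  fixes g :: "real \<Rightarrow> ennreal"
  assumes [measurable]: "g \<in> borel_measurable borel" "A \<in> sets borel"
    and "0 \<le> L"
  shows "(\<integral>\<^sup>+ x. indicator (A \<times> {0..<L}) x * g (fst x) \<partial>(lborel :: (real \<times> real) measure))
       = (\<integral>\<^sup>+ t. indicator A t * g t \<partial>lborel) * ennreal L"
proof -
  have "(\<integral>\<^sup>+ x. indicator (A \<times> {0..<L}) x * g (fst x) \<partial>(lborel :: (real \<times> real) measure))
      = (\<integral>\<^sup>+ t. \<integral>\<^sup>+ s. indicator (A \<times> {0..<L}) (t, s) * g t \<partial>lborel \<partial>lborel)"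
    unfolding lborel_prod[symmetric] by (subst lborel.nn_integral_fst[symmetric]) auto
  also have "\<dots> = (\<integral>\<^sup>+ t. (indicator A t * g t) * ennreal L \<partial>lborel)"
  proof (rule nn_integral_cong)
    fix t :: real
    have "(\<integral>\<^sup>+ s. indicator (A \<times> {0..<L}) (t, s) * g t \<partial>lborel)
        = (\<integral>\<^sup>+ s. (indicator A t * g t) * indicator {0..<L} s \<partial>lborel)"
      by (rule nn_integral_cong) (simp add: indicator_times mult_ac)
    also have "\<dots> = (indicator A t * g t) * ennreal L"
      using \<open>0 \<le> L\<close> by (subst nn_integral_cmult_indicator) auto
    finally show "(\<integral>\<^sup>+ s. indicator (A \<times> {0..<L}) (t, s) * g t \<partial>lborel)
        = (indicator A t * g t) * ennreal L" .
  qed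
  also have "\<dots> = (\<integral>\<^sup>+ t. indicator A t * g t \<partial>lborel) * ennreal L"
    by (rule nn_integral_multc) measurable
  finally show ?thesis .
qed

lemma total_curvature_nonpositive_curvature:
  fixes m :: "real \<Rightarrow> real"
  assumes nonpos: "\<forall>t>0. gauss_curv m t \<le> 0"
    and pos: "\<And>t. t > 0 \<Longrightarrow> 0 < m t"
    and cont2: "continuous_on UNIV (deriv (deriv m))"
  shows "total_curv_pos m = 0"
    and "total_curv_neg m
      = (\<integral>\<^sup>+ t. indicator {0<..} t * ennreal (deriv (deriv m) t) \<partial>lborel) * ennreal (2*pi)"
proof -
  have neg_part: "- min (gauss_curv m t) 0 * m t = deriv (deriv m) t" if "t > 0" for t
    using nonpos pos[OF that] that by (auto simp: gauss_curv_def min_def)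
  show "total_curv_pos m = 0"
    unfolding total_curv_pos_def using nonpos
    by (subst nn_integral_cong[where v = "\<lambda>_. 0"]) (auto simp: indicator_def max_def)
  have [measurable]: "deriv (deriv m) \<in> borel_measurable borel"
    using cont2 by (rule borel_measurable_continuous_onI)
  have "total_curv_neg m = (\<integral>\<^sup>+ x. indicator ({0<..} \<times> {0..<2*pi}) x
      * ennreal (deriv (deriv m) (fst x)) \<partial>(lborel :: (real \<times> real) measure))"
    unfolding total_curv_neg_def using neg_part by (intro nn_integral_cong) (auto simp: indicator_def)
  also have "\<dots> = (\<integral>\<^sup>+ t. indicator {0<..} t * ennreal (deriv (deriv m) t) \<partial>lborel) * ennreal (2*pi)"
    by (rule nn_integral_radial_strip) auto
  finally show "total_curv_neg m
      = (\<integral>\<^sup>+ t. indicator {0<..} t * ennreal (deriv (deriv m) t) \<partial>lborel) * ennreal (2*pi)" .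
qed

lemma model_profile_C2:
  fixes m :: "real \<Rightarrow> real"
  assumes "model_profile m"
  shows "\<And>x. (m has_real_derivative deriv m x) (at x)"
    and "\<And>x. (deriv m has_real_derivative deriv (deriv m) x) (at x)"
    and "continuous_on UNIV (deriv (deriv m))"
    and "m 0 = 0" "deriv m 0 = 1" "\<And>t. t > 0 \<Longrightarrow> 0 < m t"
proof -
  have smooth: "\<And>n x. ((deriv ^^ n) m) differentiable (at x)" and odd: "m (- 0) = - m 0"
    using assms unfolding model_profile_def smooth_real_def by blast+
  show "\<And>x. (m has_real_derivative deriv m x) (at x)"
    using smooth[of 0] by (simp add: DERIV_deriv_iff_real_differentiable)
  show "\<And>x. (deriv m has_real_derivative deriv (deriv m) x) (at x)"
    using smooth[of 1] by (simp add: DERIV_deriv_iff_real_differentiable)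
  show "continuous_on UNIV (deriv (deriv m))"
    using smooth[of 2] by (intro continuous_at_imp_continuous_on)
      (simp add: numeral_2_eq_2 differentiable_imp_continuous_within)
  show "m 0 = 0" using odd by simp
  show "deriv m 0 = 1" "\<And>t. t > 0 \<Longrightarrow> 0 < m t"
    using assms unfolding model_profile_def by auto
qed

theorem lemma4p1:
  fixes m :: "real \<Rightarrow> real"
  assumes "model_profile m"
    and "\<forall>t>0. gauss_curv m t \<le> 0"
    and "(\<integral>\<^sup>+ t. indicator {0<..} t * ennreal (- (t * gauss_curv m t)) \<partial>lborel) < \<infinity>"
  shows "finite_total_curvature m"
proof -
  note profile = model_profile_C2[OF assms(1)]
  have K: "gauss_curv m t = - deriv (deriv m) t / m t" for t unfolding gauss_curv_def ..
  have convex: "0 \<le> deriv (deriv m) t" if "t > 0" for t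
    using assms(2) that profile(6)[OF that] by (auto simp: K zero_le_divide_iff)
  have weight: "(\<integral>\<^sup>+ t. indicator {0<..} t
      * ennreal (t * deriv (deriv m) t / m t) \<partial>lborel) < \<infinity>"
    using assms(3) by (simp add: K)
  have "(\<integral>\<^sup>+ t. indicator {0<..} t * ennreal (deriv (deriv m) t) \<partial>lborel) < \<infinity>"
    by (rule convex_profile_second_derivative_integrable[OF profile convex weight])
  then show ?thesis
    using total_curvature_nonpositive_curvature[OF assms(2) profile(6,3)]
    unfolding finite_total_curvature_def by (simp add: ennreal_mult_less_top)
qed

end
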